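(* Let $\Omega$ be a non-empty bounded open subset of $\mathbf{R}^2$, let $h:\Omega\to\mathbf{R}$ be a continuous non-negative function, and let $w\in C^2(\Omega)$ satisfy in $\Omega$ the Monge–Ampère equation $w_{xx}w_{yy}-w_{xy}^2=h$. Then the gradient $(w_x,w_y):\Omega\to\mathbf{R}^2$ satisfies the convex hull-like property in $\Omega$.
   Context: A function $\psi:\mathbf{R}^2\to\mathbf{R}$ is quasi-convex if for each $r\in\mathbf{R}$ the set $\psi^{-1}(]-\infty,r])$ is convex. A continuous function $f:\Omega\to\mathbf{R}^2$ satisfies the convex hull-like property in $\Omega$ if for every continuous quasi-convex $\psi:\mathbf{R}^2\to\mathbf{R}$ there exists $x^*\in\partial\Omega$ such that $\limsup_{x\to x^*,\,x\in\Omega}\psi(f(x))=\sup_{x\in\Omega}\psi(f(x))$. *)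

theory Defs
  imports "HOL-Analysis.Analysis" "HOL-Library.Liminf_Limsup"
begin

definition partial_x :: "(real \<times> real \<Rightarrow> real) \<Rightarrow> real \<times> real \<Rightarrow> real" where
  "partial_x f p = deriv (\<lambda>t. f (t, snd p)) (fst p)"

definition partial_y :: "(real \<times> real \<Rightarrow> real) \<Rightarrow> real \<times> real \<Rightarrow> real" where
  "partial_y f p = deriv (\<lambda>t. f (fst p, t)) (snd p)"

definition has_partials_on :: "(real \<times> real) set \<Rightarrow> (real \<times> real \<Rightarrow> real) \<Rightarrow> bool" where
  "has_partials_on \<Omega> f \<longleftrightarrow>
     (\<forall>p\<in>\<Omega>. (\<lambda>t. f (t, snd p)) differentiable (at (fst p)) \<and>
              (\<lambda>t. f (fst p, t)) differentiable (at (snd p)))"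

definition C2_on :: "(real \<times> real) set \<Rightarrow> (real \<times> real \<Rightarrow> real) \<Rightarrow> bool" where
  "C2_on \<Omega> w \<longleftrightarrow>
     continuous_on \<Omega> w \<and>
     has_partials_on \<Omega> w \<and>
     has_partials_on \<Omega> (partial_x w) \<and> has_partials_on \<Omega> (partial_y w) \<and>
     continuous_on \<Omega> (partial_x w) \<and> continuous_on \<Omega> (partial_y w) \<and>
     continuous_on \<Omega> (partial_x (partial_x w)) \<and> continuous_on \<Omega> (partial_y (partial_x w)) \<and>
     continuous_on \<Omega> (partial_x (partial_y w)) \<and> continuous_on \<Omega> (partial_y (partial_y w))"

definition quasi_convex :: "(real \<times> real \<Rightarrow> real) \<Rightarrow> bool" where
  "quasi_convex \<psi> \<longleftrightarrow> (\<forall>r. convex {z. \<psi> z \<le> r})"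

definition convex_hull_like :: "(real \<times> real) set \<Rightarrow> (real \<times> real \<Rightarrow> real \<times> real) \<Rightarrow> bool" where
  "convex_hull_like \<Omega> f \<longleftrightarrow>
     (\<forall>\<psi>. continuous_on UNIV \<psi> \<and> quasi_convex \<psi> \<longrightarrow>
        (\<exists>x\<in>frontier \<Omega>.
           Limsup (at x within \<Omega>) (\<lambda>z. ereal (\<psi> (f z))) = (SUP z\<in>\<Omega>. ereal (\<psi> (f z)))))"

end

theory Submission
  imports Defs
begin

text \<open>
  Since the Hessian H of w has determinant h \<ge> 0, it is semidefinite, so for every direction a
  the derivative v \<mapsto> a \<bullet> H v of g = a \<bullet> \<nabla>w vanishes at a only where it vanishes
  identically. Such a g cannot attain its maximum over an open set on a nonempty compact set:
  rotating a onto the first axis, slide the maximum set upwards through a compact neighbourhood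
  while tilting g by a small multiple of the height; on each horizontal slice a maximiser has zero
  horizontal, hence zero vertical, derivative, so the tilted superlevel set keeps rising until it
  reaches a height where g is strictly below its maximum. Hence every superlevel set of g in a
  bounded \<Omega> accumulates at the boundary.

  Given a continuous quasi-convex \<psi>, if \<psi> \<circ> \<nabla>w attains its supremum at z0, the open
  convex set {\<psi> < \<psi> (\<nabla>w z0)} has a supporting half-plane at \<nabla>w z0, whose preimage is a
  superlevel set of some a \<bullet> \<nabla>w consisting of maximisers; it accumulates at a boundary point.
  If the supremum is not attained, a maximising sequence accumulates only at the boundary.
\<close>

lemma dist_Pair_le_abs_sum: "dist (x, y) (p :: real \<times> real) \<le> \<bar>x - fst p\<bar> + \<bar>y - snd p\<bar>"
proof -
  have "dist (x, y) p = sqrt ((dist x (fst p))\<^sup>2 + (dist y (snd p))\<^sup>2)"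
    by (metis dist_Pair_Pair prod.collapse)
  also have "\<dots> \<le> \<bar>dist x (fst p)\<bar> + \<bar>dist y (snd p)\<bar>"
    by (rule sqrt_sum_squares_le_sum_abs)
  finally show ?thesis by (simp add: dist_real_def)
qed

lemma open_contains_square:
  fixes p :: "real \<times> real"
  assumes "open \<Omega>" "p \<in> \<Omega>"
  obtains r where "r > 0" "\<And>x y. \<bar>x - fst p\<bar> < r \<Longrightarrow> \<bar>y - snd p\<bar> < r \<Longrightarrow> (x, y) \<in> \<Omega>"
proof -
  obtain e where "e > 0" "ball p e \<subseteq> \<Omega>"
    using assms open_contains_ball by blast
  moreover have "(x, y) \<in> ball p e" if "\<bar>x - fst p\<bar> < e/2" "\<bar>y - snd p\<bar> < e/2" for x y
    using dist_Pair_le_abs_sum[of x y p] that by (simp add: dist_commute[of p])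
  ultimately show ?thesis using that[of "e/2"] by (auto simp: subset_iff)
qed

lemma has_partials_on_partial_x:
  assumes "has_partials_on \<Omega> f" "(x, y) \<in> \<Omega>"
  shows "((\<lambda>t. f (t, y)) has_real_derivative partial_x f (x, y)) (at x)"
  using assms unfolding has_partials_on_def partial_x_def
  by (metis DERIV_deriv_iff_real_differentiable fst_conv snd_conv)

lemma has_partials_on_partial_y:
  assumes "has_partials_on \<Omega> f" "(x, y) \<in> \<Omega>"
  shows "((\<lambda>t. f (x, t)) has_real_derivative partial_y f (x, y)) (at y)"
  using assms unfolding has_partials_on_def partial_y_def
  by (metis DERIV_deriv_iff_real_differentiable fst_conv snd_conv)

lemma MVT_increment:
  assumes "0 < h" "\<And>s. a \<le> s \<Longrightarrow> s \<le> a + h \<Longrightarrow> (f has_real_derivative f' s) (at s)"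
  obtains \<xi> where "a < \<xi>" "\<xi> < a + h" "f (a + h) - f a = h * f' \<xi>"
  using MVT2[of a "a + h" f f'] assms by auto

lemma mixed_partials_meet:
  fixes w :: "real \<times> real \<Rightarrow> real"
  assumes hw: "has_partials_on \<Omega> w" and hx: "has_partials_on \<Omega> (partial_x w)"
    and hy: "has_partials_on \<Omega> (partial_y w)"
    and square: "\<And>x y. \<bar>x - x0\<bar> < r \<Longrightarrow> \<bar>y - y0\<bar> < r \<Longrightarrow> (x, y) \<in> \<Omega>"
    and h: "0 < h" "h < r"
  obtains \<xi> \<eta> \<xi>' \<eta>' where "\<bar>\<xi> - x0\<bar> < h" "\<bar>\<eta> - y0\<bar> < h" "\<bar>\<xi>' - x0\<bar> < h" "\<bar>\<eta>' - y0\<bar> < h"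
    "partial_y (partial_x w) (\<xi>, \<eta>) = partial_x (partial_y w) (\<xi>', \<eta>')"
proof -
  \<comment> \<open>both mixed partials compute the second difference of w over the square of side h\<close>
  have inside: "(x, y) \<in> \<Omega>" if "x0 \<le> x" "x \<le> x0 + h" "y0 \<le> y" "y \<le> y0 + h" for x y
    using square[of x y] that h by auto
  obtain \<xi> where \<xi>: "x0 < \<xi>" "\<xi> < x0 + h"
    "(w (x0 + h, y0 + h) - w (x0 + h, y0)) - (w (x0, y0 + h) - w (x0, y0))
       = h * (partial_x w (\<xi>, y0 + h) - partial_x w (\<xi>, y0))"
    by (rule MVT_increment[OF h(1), of x0 "\<lambda>s. w (s, y0 + h) - w (s, y0)"
          "\<lambda>s. partial_x w (s, y0 + h) - partial_x w (s, y0)", simplified])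
       (use inside h in \<open>auto intro!: DERIV_diff has_partials_on_partial_x[OF hw]\<close>)
  obtain \<eta> where \<eta>: "y0 < \<eta>" "\<eta> < y0 + h"
    "partial_x w (\<xi>, y0 + h) - partial_x w (\<xi>, y0) = h * partial_y (partial_x w) (\<xi>, \<eta>)"
    by (rule MVT_increment[OF h(1), of y0 "\<lambda>t. partial_x w (\<xi>, t)"
          "\<lambda>t. partial_y (partial_x w) (\<xi>, t)", simplified])
       (use inside \<xi> in \<open>auto intro!: has_partials_on_partial_y[OF hx]\<close>)
  obtain \<eta>' where \<eta>': "y0 < \<eta>'" "\<eta>' < y0 + h"
    "(w (x0 + h, y0 + h) - w (x0, y0 + h)) - (w (x0 + h, y0) - w (x0, y0))
       = h * (partial_y w (x0 + h, \<eta>') - partial_y w (x0, \<eta>'))"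
    by (rule MVT_increment[OF h(1), of y0 "\<lambda>t. w (x0 + h, t) - w (x0, t)"
          "\<lambda>t. partial_y w (x0 + h, t) - partial_y w (x0, t)", simplified])
       (use inside h in \<open>auto intro!: DERIV_diff has_partials_on_partial_y[OF hw]\<close>)
  obtain \<xi>' where \<xi>': "x0 < \<xi>'" "\<xi>' < x0 + h"
    "partial_y w (x0 + h, \<eta>') - partial_y w (x0, \<eta>') = h * partial_x (partial_y w) (\<xi>', \<eta>')"
    by (rule MVT_increment[OF h(1), of x0 "\<lambda>s. partial_y w (s, \<eta>')"
          "\<lambda>s. partial_x (partial_y w) (s, \<eta>')", simplified])
       (use inside \<eta>' in \<open>auto intro!: has_partials_on_partial_x[OF hy]\<close>)
  have "h * h * partial_y (partial_x w) (\<xi>, \<eta>) = h * h * partial_x (partial_y w) (\<xi>', \<eta>')"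
    using \<xi>(3) \<eta>(3) \<eta>'(3) \<xi>'(3) by (simp add: algebra_simps)
  then show ?thesis
    using that[of \<xi> \<eta> \<xi>' \<eta>'] \<xi> \<eta> \<xi>' \<eta>' h by auto
qed

lemma partial_yx_eq_partial_xy:
  fixes w :: "real \<times> real \<Rightarrow> real"
  assumes "open \<Omega>" and hw: "has_partials_on \<Omega> w" and hx: "has_partials_on \<Omega> (partial_x w)"
    and hy: "has_partials_on \<Omega> (partial_y w)"
    and "continuous_on \<Omega> (partial_y (partial_x w))" "continuous_on \<Omega> (partial_x (partial_y w))"
    and p: "p \<in> \<Omega>"
  shows "partial_y (partial_x w) p = partial_x (partial_y w) p"
proof (rule ccontr)
  let ?A = "partial_y (partial_x w)" and ?B = "partial_x (partial_y w)"
  assume "?A p \<noteq> ?B p"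
  define e where "e = \<bar>?A p - ?B p\<bar> / 2"
  have "e > 0" using \<open>?A p \<noteq> ?B p\<close> by (simp add: e_def)
  obtain r where r: "r > 0" "\<And>x y. \<bar>x - fst p\<bar> < r \<Longrightarrow> \<bar>y - snd p\<bar> < r \<Longrightarrow> (x, y) \<in> \<Omega>"
    using open_contains_square[OF \<open>open \<Omega>\<close> p] by blast
  have "isCont ?A p" "isCont ?B p"
    using assms continuous_on_eq_continuous_at by blast+
  then obtain d1 d2 where d1: "d1 > 0" "\<And>z. dist z p < d1 \<Longrightarrow> dist (?A z) (?A p) < e"
    and d2: "d2 > 0" "\<And>z. dist z p < d2 \<Longrightarrow> dist (?B z) (?B p) < e"
    using \<open>e > 0\<close> unfolding continuous_at_eps_delta by metis
  define h where "h = min r (min d1 d2) / 4"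
  have h: "0 < h" "h < r" "2 * h < d1" "2 * h < d2" using r d1 d2 by (auto simp: h_def)
  obtain \<xi> \<eta> \<xi>' \<eta>' where near: "\<bar>\<xi> - fst p\<bar> < h" "\<bar>\<eta> - snd p\<bar> < h" "\<bar>\<xi>' - fst p\<bar> < h" "\<bar>\<eta>' - snd p\<bar> < h"
    and eq: "?A (\<xi>, \<eta>) = ?B (\<xi>', \<eta>')"
    using mixed_partials_meet[OF hw hx hy r(2) h(1,2)] by blast
  have "dist (\<xi>, \<eta>) p < d1" "dist (\<xi>', \<eta>') p < d2"
    using dist_Pair_le_abs_sum[of \<xi> \<eta> p] dist_Pair_le_abs_sum[of \<xi>' \<eta>' p] near h by linarith+
  then have "\<bar>?A (\<xi>, \<eta>) - ?A p\<bar> < e" "\<bar>?B (\<xi>', \<eta>') - ?B p\<bar> < e"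
    using d1 d2 by (simp_all add: dist_real_def)
  then have "\<bar>?A p - ?B p\<bar> < 2 * e" using eq by linarith
  then show False by (simp add: e_def)
qed

lemma has_derivative_from_partials:
  fixes u :: "real \<times> real \<Rightarrow> real"
  assumes "open \<Omega>" and hu: "has_partials_on \<Omega> u" and cy: "continuous_on \<Omega> (partial_y u)"
    and p: "p \<in> \<Omega>"
  shows "(u has_derivative (\<lambda>v. fst v * partial_x u p + snd v * partial_y u p)) (at p)"
proof -
  obtain x0 y0 where p0: "p = (x0, y0)" by (cases p)
  obtain r where r: "r > 0" "\<And>x y. \<bar>x - fst p\<bar> < r \<Longrightarrow> \<bar>y - snd p\<bar> < r \<Longrightarrow> (x, y) \<in> \<Omega>"
    using open_contains_square[OF assms(1) p] by blast
  define X where "X = ball x0 r"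
  define Y where "Y = ball y0 r"
  have XY: "x \<in> X \<Longrightarrow> y \<in> Y \<Longrightarrow> (x, y) \<in> \<Omega>" for x y
    using r p0 by (auto simp: X_def Y_def dist_real_def abs_minus_commute)
  have inXY: "(x0, y0) \<in> X \<times> Y" using r by (simp add: X_def Y_def)
  have scale: "blinfun_apply (blinfun_scaleR_left c) = (*) c" for c :: real
    by (auto simp: fun_eq_iff)
  have fx: "((\<lambda>x. u (x, y0)) has_derivative (*) (partial_x u p)) (at x0 within X)"
    using has_partials_on_partial_x[OF hu, of x0 y0] p p0
    by (auto simp: has_field_derivative_def intro: has_derivative_at_withinI)
  have fy: "((\<lambda>y. u (x, y)) has_derivative blinfun_apply (blinfun_scaleR_left (partial_y u (x, y))))
      (at y within Y)" if "x \<in> X" "y \<in> Y" for x y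
    using has_partials_on_partial_y[OF hu XY[OF that]] unfolding has_field_derivative_def scale
    by (auto intro: has_derivative_at_withinI)
  have "isCont (partial_y u) (x0, y0)"
    using cy assms(1) p p0 continuous_on_eq_continuous_at by blast
  then have "isCont (\<lambda>z. blinfun_scaleR_left (partial_y u z)) (x0, y0)"
    by (intro continuous_intros)
  then have cont: "continuous (at (x0, y0) within X \<times> Y) (\<lambda>(x, y). blinfun_scaleR_left (partial_y u (x, y)))"
    by (simp add: split_beta' continuous_at_imp_continuous_at_within)
  have "((\<lambda>(x, y). u (x, y)) has_derivative
      (\<lambda>(tx, ty). partial_x u p * tx + blinfun_scaleR_left (partial_y u (x0, y0)) ty)) (at (x0, y0) within X \<times> Y)"
    by (rule has_derivative_partialsI[OF fx fy cont]) (use inXY in \<open>auto simp: Y_def\<close>)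
  then have "(u has_derivative (\<lambda>(tx, ty). partial_x u p * tx + blinfun_scaleR_left (partial_y u (x0, y0)) ty)) (at p)"
    using at_within_open[OF inXY] p0 by (simp add: split_beta' X_def Y_def open_Times)
  then show ?thesis
    by (rule has_derivative_eq_rhs) (auto simp: p0 split_beta' fun_eq_iff mult.commute)
qed

lemma C2_on_gradient_has_derivative:
  assumes "open \<Omega>" "C2_on \<Omega> w" "p \<in> \<Omega>"
  shows "((\<lambda>z. (partial_x w z, partial_y w z)) has_derivative
           (\<lambda>v. (fst v * partial_x (partial_x w) p + snd v * partial_y (partial_x w) p,
                 fst v * partial_y (partial_x w) p + snd v * partial_y (partial_y w) p))) (at p)"
proof -
  note C2 = assms(2)[unfolded C2_on_def]
  have "partial_x (partial_y w) p = partial_y (partial_x w) p"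
    using partial_yx_eq_partial_xy[OF assms(1) _ _ _ _ _ assms(3)] C2 by metis
  moreover have "(partial_x w has_derivative
      (\<lambda>v. fst v * partial_x (partial_x w) p + snd v * partial_y (partial_x w) p)) (at p)"
                "(partial_y w has_derivative
      (\<lambda>v. fst v * partial_x (partial_y w) p + snd v * partial_y (partial_y w) p)) (at p)"
    using has_derivative_from_partials[OF assms(1) _ _ assms(3)] C2 by blast+
  ultimately show ?thesis by (auto intro: has_derivative_Pair)
qed

lemma det_nonneg_quadratic_form_null:
  fixes A B D a1 a2 :: real
  assumes det: "B\<^sup>2 \<le> A * D" and null: "a1 * (a1 * A + a2 * B) + a2 * (a1 * B + a2 * D) = 0"
  shows "a1 * A + a2 * B = 0 \<and> a1 * B + a2 * D = 0"
proof -
  define X where "X = a1 * A + a2 * B"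
  define Y where "Y = a1 * B + a2 * D"
  have "A * (a1 * X + a2 * Y) = X\<^sup>2 + a2\<^sup>2 * (A * D - B\<^sup>2)"
    and "D * (a1 * X + a2 * Y) = Y\<^sup>2 + a1\<^sup>2 * (A * D - B\<^sup>2)"
    unfolding X_def Y_def by (simp_all add: algebra_simps power2_eq_square)
  moreover have "a1 * X + a2 * Y = 0" using null by (simp add: X_def Y_def)
  ultimately have "X\<^sup>2 + a2\<^sup>2 * (A * D - B\<^sup>2) = 0" "Y\<^sup>2 + a1\<^sup>2 * (A * D - B\<^sup>2) = 0"
    by simp_all
  moreover have "0 \<le> a2\<^sup>2 * (A * D - B\<^sup>2)" "0 \<le> a1\<^sup>2 * (A * D - B\<^sup>2)"
    using det by simp_all
  ultimately have "X\<^sup>2 = 0" "Y\<^sup>2 = 0"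
    using zero_le_power2[of X] zero_le_power2[of Y] by linarith+
  then show ?thesis by (simp add: X_def Y_def)
qed

lemma inner_gradient_derivative_null_direction:
  fixes a :: "real \<times> real"
  assumes "open \<Omega>" "C2_on \<Omega> w" "p \<in> \<Omega>"
    and det: "(partial_y (partial_x w) p)\<^sup>2 \<le> partial_x (partial_x w) p * partial_y (partial_y w) p"
  shows "\<exists>D. ((\<lambda>z. a \<bullet> (partial_x w z, partial_y w z)) has_derivative D) (at p) \<and>
             (D a = 0 \<longrightarrow> (\<forall>v. D v = 0))"
proof -
  obtain a1 a2 where a: "a = (a1, a2)" by (cases a)
  define A where "A = partial_x (partial_x w) p"
  define B where "B = partial_y (partial_x w) p"
  define D where "D = partial_y (partial_y w) p"
  define L where "L v = fst v * (a1 * A + a2 * B) + snd v * (a1 * B + a2 * D)" for v :: "real \<times> real"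
  have "((\<lambda>z. a \<bullet> (partial_x w z, partial_y w z)) has_derivative L) (at p)"
    using has_derivative_inner_right[OF C2_on_gradient_has_derivative[OF assms(1-3)], of a]
    by (rule has_derivative_eq_rhs) (simp add: fun_eq_iff L_def A_def B_def D_def a algebra_simps)
  moreover have "L a = 0 \<longrightarrow> (\<forall>v. L v = 0)"
  proof
    assume "L a = 0"
    then have "a1 * A + a2 * B = 0 \<and> a1 * B + a2 * D = 0"
      using det by (intro det_nonneg_quadratic_form_null) (simp_all add: L_def a A_def B_def D_def)
    then show "\<forall>v. L v = 0" by (simp add: L_def)
  qed
  ultimately show ?thesis by blast
qed

lemma closed_right_continuation:
  fixes S :: "real set"
  assumes "a \<le> b" "closed S" "a \<in> S"
    and step: "\<And>t. t \<in> S \<Longrightarrow> a \<le> t \<Longrightarrow> t < b \<Longrightarrow> \<exists>\<delta>>0. {t..<t + \<delta>} \<subseteq> S"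
  shows "b \<in> S"
proof (rule ccontr)
  assume "b \<notin> S"
  define R where "R = {a..b} - S"
  have "b \<in> R" "bdd_below R" using assms(1) \<open>b \<notin> S\<close> by (auto simp: R_def)
  define \<sigma> where "\<sigma> = Inf R"
  have \<sigma>: "a \<le> \<sigma>" "\<sigma> \<le> b" "\<And>r. r \<in> R \<Longrightarrow> \<sigma> \<le> r"
    using \<open>b \<in> R\<close> \<open>bdd_below R\<close> unfolding \<sigma>_def
    by (auto intro!: cInf_greatest cInf_lower simp: R_def)
  have below: "t \<in> S" if "a \<le> t" "t < \<sigma>" for t
    using that \<sigma> by (force simp: R_def)
  have "\<sigma> \<in> S"
  proof (cases "\<sigma> = a")
    case False
    then have "\<exists>y\<in>S. dist y \<sigma> < e" if "e > 0" for e
      using below[of "max a (\<sigma> - e/2)"] \<sigma>(1) that by (intro bexI[of _ "max a (\<sigma> - e/2)"]) (auto simp: dist_real_def)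
    then show ?thesis using closed_approachable[OF \<open>closed S\<close>] by blast
  qed (use \<open>a \<in> S\<close> in simp)
  then have "\<sigma> < b" using \<sigma>(2) \<open>b \<notin> S\<close> by (cases "\<sigma> = b") auto
  then obtain \<delta> where "\<delta> > 0" "{\<sigma>..<\<sigma> + \<delta>} \<subseteq> S"
    using step[OF \<open>\<sigma> \<in> S\<close> \<sigma>(1)] by blast
  have "\<sigma> + \<delta> \<le> r" if "r \<in> R" for r
  proof (rule ccontr)
    assume "\<not> \<sigma> + \<delta> \<le> r"
    then have "r \<in> S" using \<sigma>(3)[OF that] \<open>{\<sigma>..<\<sigma> + \<delta>} \<subseteq> S\<close> by auto
    then show False using that by (simp add: R_def)
  qed
  then have "\<sigma> + \<delta> \<le> \<sigma>"
    unfolding \<sigma>_def using \<open>b \<in> R\<close> by (intro cInf_greatest) auto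
  then show False using \<open>\<delta> > 0\<close> by simp
qed

lemma compact_strict_upper_bound_gap:
  fixes G :: "'a::topological_space \<Rightarrow> real"
  assumes "compact K" "continuous_on K G" "\<And>p. p \<in> K \<Longrightarrow> G p < M"
  obtains \<mu> where "\<mu> > 0" "\<And>p. p \<in> K \<Longrightarrow> G p \<le> M - \<mu>"
proof (cases "K = {}")
  case False
  then obtain p0 where "p0 \<in> K" "\<And>p. p \<in> K \<Longrightarrow> G p \<le> G p0"
    using continuous_attains_sup[OF assms(1) False assms(2)] by blast
  then show ?thesis using that[of "M - G p0"] assms(3) by force
qed (use that[of 1] in auto)

lemma has_derivative_imp_partial_fst:
  assumes "(G has_derivative D) (at (s, t))"
  shows "((\<lambda>x. G (x, t)) has_real_derivative D (1, 0)) (at s)"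
proof -
  have "((\<lambda>x. (x, t)) has_derivative (\<lambda>h. (h, 0))) (at s)"
    by (auto intro!: derivative_eq_intros)
  from has_derivative_compose[OF this assms]
  have "((\<lambda>x. G (x, t)) has_derivative (\<lambda>h. D (h, 0))) (at s)" .
  moreover have "(\<lambda>h. D (h, 0)) = (*) (D (1, 0))"
  proof
    show "D (h, 0) = D (1, 0) * h" for h
      using linear_scale[OF has_derivative_linear[OF assms], of h "(1, 0)"] by (simp add: mult.commute)
  qed
  ultimately show ?thesis by (simp add: has_field_derivative_def)
qed

lemma has_derivative_imp_partial_snd:
  assumes "(G has_derivative D) (at (s, t))"
  shows "((\<lambda>y. G (s, y)) has_real_derivative D (0, 1)) (at t)"
proof -
  have "((\<lambda>y. (s, y)) has_derivative (\<lambda>h. (0, h))) (at t)"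
    by (auto intro!: derivative_eq_intros)
  from has_derivative_compose[OF this assms]
  have "((\<lambda>y. G (s, y)) has_derivative (\<lambda>h. D (0, h))) (at t)" .
  moreover have "(\<lambda>h. D (0, h)) = (*) (D (0, 1))"
  proof
    show "D (0, h) = D (0, 1) * h" for h
      using linear_scale[OF has_derivative_linear[OF assms], of h "(0, 1)"] by (simp add: mult.commute)
  qed
  ultimately show ?thesis by (simp add: has_field_derivative_def)
qed

lemma tilted_increase_from_zero_partial_snd:
  fixes G :: "real \<times> real \<Rightarrow> real"
  assumes "(G has_derivative D) (at (s, t))" "D (0, 1) = 0" "\<epsilon> > 0"
  obtains d where "d > 0" "\<And>t'. t \<le> t' \<Longrightarrow> t' < t + d \<Longrightarrow> G (s, t) + \<epsilon> * t \<le> G (s, t') + \<epsilon> * t'"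
proof -
  have "((\<lambda>y. G (s, y) + \<epsilon> * y) has_real_derivative D (0, 1) + \<epsilon> * 1) (at t)"
    by (intro DERIV_add DERIV_cmult DERIV_ident has_derivative_imp_partial_snd[OF assms(1)])
  then have "((\<lambda>y. G (s, y) + \<epsilon> * y) has_real_derivative \<epsilon>) (at t)" using assms(2) by simp
  from DERIV_pos_inc_right[OF this \<open>\<epsilon> > 0\<close>] obtain d where
    d: "d > 0" "\<forall>h>0. h < d \<longrightarrow> G (s, t) + \<epsilon> * t < G (s, t + h) + \<epsilon> * (t + h)"
    by blast
  have "G (s, t) + \<epsilon> * t \<le> G (s, t') + \<epsilon> * t'" if "t \<le> t'" "t' < t + d" for t'
    using d(2) that by (cases "t' = t") (auto dest: spec[of _ "t' - t"])
  with d(1) show ?thesis using that by blast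
qed

lemma superlevel_heights_extend_upward:
  fixes G :: "real \<times> real \<Rightarrow> real" and N :: "(real \<times> real) set" and c \<epsilon> :: real
  defines "C \<equiv> {p \<in> N. c \<le> G p + \<epsilon> * snd p}"
  assumes "compact N" "continuous_on N G" "\<epsilon> > 0"
    and der: "\<And>p. p \<in> interior N \<Longrightarrow> \<exists>D. (G has_derivative D) (at p) \<and> (D (1, 0) = 0 \<longrightarrow> D (0, 1) = 0)"
    and t: "t \<in> snd ` C"
    and interior: "\<And>p. p \<in> C \<Longrightarrow> snd p = t \<Longrightarrow> p \<in> interior N"
  obtains \<delta> where "\<delta> > 0" "{t..<t + \<delta>} \<subseteq> snd ` C"
proof -
  obtain s where "(s, t) \<in> C" using t by force
  define K where "K = N \<inter> {p. snd p = t}"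
  have "compact K"
    unfolding K_def by (intro compact_Int_closed assms(2) closed_Collect_eq continuous_intros)
  moreover have "(s, t) \<in> K" using \<open>(s, t) \<in> C\<close> by (simp add: C_def K_def)
  moreover have "continuous_on K G" using continuous_on_subset[OF assms(3)] by (simp add: K_def)
  ultimately obtain q where q: "q \<in> K" "\<And>p. p \<in> K \<Longrightarrow> G p \<le> G q"
    using continuous_attains_sup[of K G] by blast
  obtain s' where q': "q = (s', t)" using q(1) by (cases q) (auto simp: K_def)
  have "q \<in> C" using q \<open>(s, t) \<in> K\<close> \<open>(s, t) \<in> C\<close> by (force simp: C_def K_def q')
  then have "q \<in> interior N" using interior q' by simp
  then obtain r where r: "r > 0" "ball q r \<subseteq> N" by (auto simp: mem_interior)
  obtain D where D: "(G has_derivative D) (at q)" "D (1, 0) = 0 \<longrightarrow> D (0, 1) = 0"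
    using der[OF \<open>q \<in> interior N\<close>] by blast
  have "D (1, 0) = 0"
  proof (rule DERIV_local_max[OF has_derivative_imp_partial_fst[OF D(1)[unfolded q']] r(1)], intro allI impI)
    fix y assume "\<bar>s' - y\<bar> < r"
    then have "(y, t) \<in> ball q r" by (simp add: q' dist_Pair_Pair dist_real_def)
    then have "(y, t) \<in> N" using r(2) by blast
    then show "G (y, t) \<le> G (s', t)" using q(2) q' by (simp add: K_def)
  qed
  then obtain d where d: "d > 0" "\<And>t'. t \<le> t' \<Longrightarrow> t' < t + d \<Longrightarrow> G (s', t) + \<epsilon> * t \<le> G (s', t') + \<epsilon> * t'"
    using tilted_increase_from_zero_partial_snd[OF D(1)[unfolded q'] _ \<open>\<epsilon> > 0\<close>] D(2) by blast
  have "t' \<in> snd ` C" if "t \<le> t'" "t' < t + min d r" for t'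
  proof -
    have "(s', t') \<in> ball q r" using that by (simp add: q' dist_Pair_Pair dist_real_def)
    then have "(s', t') \<in> N" using r(2) by blast
    moreover have "G (s', t) + \<epsilon> * t \<le> G (s', t') + \<epsilon> * t'" using d(2) that by simp
    ultimately have "(s', t') \<in> C" using \<open>q \<in> C\<close> q' by (simp add: C_def)
    then show ?thesis by force
  qed
  then have "{t..<t + min d r} \<subseteq> snd ` C" by auto
  then show ?thesis using that[of "min d r"] d(1) r(1) by simp
qed

lemma compact_neighbourhood_frontier_gap:
  fixes G :: "'a::heine_borel \<Rightarrow> real"
  assumes "open Q" "continuous_on Q G" "\<And>p. p \<in> Q \<Longrightarrow> G p \<le> M" "compact {p \<in> Q. G p = M}"
  obtains N \<eta> where "compact N" "N \<subseteq> Q" "{p \<in> Q. G p = M} \<subseteq> interior N"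
    "\<eta> > 0" "\<And>p. p \<in> frontier N \<Longrightarrow> G p \<le> M - \<eta>"
proof -
  define T where "T = {p \<in> Q. G p = M}"
  obtain U N where UN: "T \<subseteq> U" "U \<subseteq> N" "N \<subseteq> Q" "openin (top_of_set Q) U" "compact N"
    using open_imp_locally_compact[OF \<open>open Q\<close>] assms(4)
    unfolding locally_compact_compact T_def by (metis (no_types, lifting) mem_Collect_eq subsetI)
  have "open U" using UN(4) by (simp add: openin_open_eq[OF \<open>open Q\<close>])
  then have TN: "T \<subseteq> interior N" using UN(1,2) interior_maximal by blast
  have "frontier N \<subseteq> N" using UN(5) by (simp add: compact_imp_closed frontier_subset_closed)
  have "G p < M" if "p \<in> frontier N" for p
  proof -
    have "p \<in> Q" using that \<open>frontier N \<subseteq> N\<close> UN(3) by blast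
    moreover have "p \<notin> T" using that TN by (auto simp: frontier_def)
    ultimately show ?thesis using assms(3)[of p] by (simp add: T_def)
  qed
  moreover have "continuous_on (frontier N) G"
    by (rule continuous_on_subset[OF assms(2)]) (use \<open>frontier N \<subseteq> N\<close> UN(3) in blast)
  ultimately obtain \<eta> where "\<eta> > 0" "\<And>p. p \<in> frontier N \<Longrightarrow> G p \<le> M - \<eta>"
    using compact_strict_upper_bound_gap[OF compact_frontier[OF UN(5)]] by blast
  then show ?thesis by (rule that[OF UN(5) UN(3) TN[unfolded T_def]])
qed

lemma tilted_superlevel_reaches_height:
  fixes G :: "real \<times> real \<Rightarrow> real"
  assumes "compact N" "continuous_on N G"
    and der: "\<And>p. p \<in> interior N \<Longrightarrow> \<exists>D. (G has_derivative D) (at p) \<and> (D (1, 0) = 0 \<longrightarrow> D (0, 1) = 0)"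
    and frontier: "\<And>p. p \<in> frontier N \<Longrightarrow> G p \<le> M - \<eta>"
    and "p1 \<in> N" "M \<le> G p1" "0 < \<epsilon>" "\<epsilon> < \<eta>"
  obtains p where "p \<in> N" "snd p = snd p1 + 1" "M - \<epsilon> \<le> G p"
proof -
  \<comment> \<open>the heights of the superlevel set of G tilted by \<epsilon> times the height form a closed set
      containing snd p1 and growing to the right, so they contain snd p1 + 1\<close>
  define t1 where "t1 = snd p1"
  define C where "C = {p \<in> N. M + \<epsilon> * t1 \<le> G p + \<epsilon> * snd p}"
  have "continuous_on N (\<lambda>p. G p + \<epsilon> * snd p)" using assms(2) by (intro continuous_intros)
  from continuous_closed_preimage[OF this compact_imp_closed[OF assms(1)] closed_atLeast]
  have "closed (N \<inter> (\<lambda>p. G p + \<epsilon> * snd p) -` {M + \<epsilon> * t1..})" .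
  from compact_Int_closed[OF assms(1) this] have "compact C"
    by (simp add: C_def Int_def vimage_def)
  then have closed: "closed (snd ` C)"
    by (intro compact_imp_closed compact_continuous_image continuous_intros)
  have start: "t1 \<in> snd ` C"
    using assms(5,6) by (force simp: C_def t1_def)
  have step: "\<exists>\<delta>>0. {t..<t + \<delta>} \<subseteq> snd ` C" if t: "t \<in> snd ` C" "t1 \<le> t" "t < t1 + 1" for t
  proof -
    have interior: "p \<in> interior N" if p: "p \<in> C" "snd p = t" for p
    proof -
      have "\<epsilon> * (t - t1) \<le> \<epsilon>"
        using assms(7) t(3) by (intro mult_left_le) auto
      then have "G p > M - \<eta>" using p assms(8) by (simp add: C_def algebra_simps)
      then have "p \<notin> frontier N" using frontier[of p] by linarith
      moreover have "p \<in> closure N" using p closure_subset by (auto simp: C_def)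
      ultimately show "p \<in> interior N" by (simp add: frontier_def)
    qed
    obtain \<delta> where "\<delta> > 0" "{t..<t + \<delta>} \<subseteq> snd ` C"
      unfolding C_def
      by (rule superlevel_heights_extend_upward[OF assms(1,2,7) der t(1)[unfolded C_def]
            interior[unfolded C_def]])
    then show ?thesis by blast
  qed
  have "t1 + 1 \<in> snd ` C"
    by (rule closed_right_continuation[OF _ closed start step]) simp_all
  then obtain p where p: "p \<in> C" "snd p = t1 + 1" by (metis imageE)
  then have "M + \<epsilon> * t1 \<le> G p + \<epsilon> * t1 + \<epsilon>" by (simp add: C_def distrib_left)
  then show ?thesis using that[of p] p by (simp add: C_def t1_def)
qed

lemma compact_maximum_set_impossible:
  fixes G :: "real \<times> real \<Rightarrow> real"
  assumes "open Q" "continuous_on Q G" and le: "\<And>p. p \<in> Q \<Longrightarrow> G p \<le> M"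
    and "compact {p \<in> Q. G p = M}" "{p \<in> Q. G p = M} \<noteq> {}"
    and der: "\<And>p. p \<in> Q \<Longrightarrow> \<exists>D. (G has_derivative D) (at p) \<and> (D (1, 0) = 0 \<longrightarrow> D (0, 1) = 0)"
  shows False
proof -
  obtain N \<eta> where N: "compact N" "N \<subseteq> Q" "{p \<in> Q. G p = M} \<subseteq> interior N"
    and \<eta>: "\<eta> > 0" "\<And>p. p \<in> frontier N \<Longrightarrow> G p \<le> M - \<eta>"
    using compact_neighbourhood_frontier_gap[OF assms(1-4)] by blast
  have cG: "continuous_on N G" using continuous_on_subset[OF assms(2) N(2)] .
  obtain p1 where p1: "p1 \<in> {p \<in> Q. G p = M}" "\<And>p. p \<in> {p \<in> Q. G p = M} \<Longrightarrow> snd p \<le> snd p1"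
    using continuous_attains_sup[OF assms(4,5) continuous_on_snd[OF continuous_on_id]] by blast
  have "p1 \<in> N" using p1 N(3) interior_subset by blast
  define K where "K = N \<inter> {p. snd p = snd p1 + 1}"
  have "compact K"
    unfolding K_def by (intro compact_Int_closed N(1) closed_Collect_eq continuous_intros)
  moreover have "continuous_on K G" using cG by (rule continuous_on_subset) (simp add: K_def)
  moreover have "G p < M" if "p \<in> K" for p
  proof -
    have "p \<in> Q" "snd p > snd p1" using that N(2) by (auto simp: K_def)
    then have "G p \<noteq> M" using p1(2)[of p] by force
    then show ?thesis using le[OF \<open>p \<in> Q\<close>] by simp
  qed
  ultimately obtain \<mu> where \<mu>: "\<mu> > 0" "\<And>p. p \<in> K \<Longrightarrow> G p \<le> M - \<mu>"
    using compact_strict_upper_bound_gap by blast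
  have der_interior: "\<exists>D. (G has_derivative D) (at p) \<and> (D (1, 0) = 0 \<longrightarrow> D (0, 1) = 0)"
    if "p \<in> interior N" for p
  proof (rule der)
    show "p \<in> Q" using that interior_subset N(2) by blast
  qed
  have "M \<le> G p1" "0 < min \<mu> \<eta> / 2" "min \<mu> \<eta> / 2 < \<eta>" using p1(1) \<mu>(1) \<eta>(1) by auto
  then obtain p where "p \<in> N" "snd p = snd p1 + 1" "M - min \<mu> \<eta> / 2 \<le> G p"
    using tilted_superlevel_reaches_height[OF N(1) cG der_interior \<eta>(2) \<open>p1 \<in> N\<close>] by blast
  then show False using \<mu>(2)[of p] \<mu>(1) by (simp add: K_def)
qed

lemma similarity_mapping_first_axis:
  fixes a :: "real \<times> real"
  assumes "a \<noteq> 0"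
  obtains \<Phi> \<Psi> :: "real \<times> real \<Rightarrow> real \<times> real"
  where "bounded_linear \<Phi>" "continuous_on UNIV \<Psi>" "\<And>v. \<Psi> (\<Phi> v) = v" "\<And>z. \<Phi> (\<Psi> z) = z" "\<Phi> (1, 0) = a"
proof -
  obtain a1 a2 where a: "a = (a1, a2)" by (cases a)
  define n where "n = a1\<^sup>2 + a2\<^sup>2"
  have "n \<noteq> 0" using \<open>a \<noteq> 0\<close> by (simp add: n_def a sum_power2_eq_zero_iff zero_prod_def)
  \<comment> \<open>multiplication by a1 + i a2 in the complex plane, and its inverse\<close>
  define \<Phi> where "\<Phi> v = (fst v * a1 - snd v * a2, fst v * a2 + snd v * a1)" for v :: "real \<times> real"
  define \<Psi> where "\<Psi> z = ((a1 * fst z + a2 * snd z) / n, (a1 * snd z - a2 * fst z) / n)" for z :: "real \<times> real"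
  have "linear \<Phi>" by (auto simp: linear_iff \<Phi>_def algebra_simps)
  then have "bounded_linear \<Phi>" by (rule linear_conv_bounded_linear[THEN iffD1])
  moreover have "continuous_on UNIV \<Psi>"
    using \<open>n \<noteq> 0\<close> unfolding \<Psi>_def by (auto intro!: continuous_intros)
  moreover have "\<Psi> (\<Phi> v) = v" for v
    using \<open>n \<noteq> 0\<close> unfolding \<Phi>_def \<Psi>_def
    by (simp add: prod_eq_iff divide_simps) (simp add: n_def algebra_simps power2_eq_square)
  moreover have "\<Phi> (\<Psi> z) = z" for z
    using \<open>n \<noteq> 0\<close> unfolding \<Phi>_def \<Psi>_def
    by (simp add: prod_eq_iff divide_simps) (simp add: n_def algebra_simps power2_eq_square)
  moreover have "\<Phi> (1, 0) = a" by (simp add: \<Phi>_def a)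
  ultimately show ?thesis by (rule that)
qed

lemma compact_maximum_set_impossible_direction:
  fixes g :: "real \<times> real \<Rightarrow> real" and a :: "real \<times> real"
  assumes "open \<Omega>" "continuous_on \<Omega> g" "\<And>p. p \<in> \<Omega> \<Longrightarrow> g p \<le> M"
    and "compact {p \<in> \<Omega>. g p = M}" "{p \<in> \<Omega>. g p = M} \<noteq> {}" "a \<noteq> 0"
    and der: "\<And>p. p \<in> \<Omega> \<Longrightarrow> \<exists>D. (g has_derivative D) (at p) \<and> (D a = 0 \<longrightarrow> (\<forall>v. D v = 0))"
  shows False
proof -
  obtain \<Phi> \<Psi> :: "real \<times> real \<Rightarrow> real \<times> real" where \<Phi>: "bounded_linear \<Phi>" "continuous_on UNIV \<Psi>" "\<And>v. \<Psi> (\<Phi> v) = v"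
    "\<And>z. \<Phi> (\<Psi> z) = z" "\<Phi> (1, 0) = a"
    using similarity_mapping_first_axis[OF \<open>a \<noteq> 0\<close>] by metis
  have "continuous_on UNIV \<Phi>" using \<Phi>(1) by (simp add: linear_continuous_on)
  define Q where "Q = \<Phi> -` \<Omega>"
  have max_set: "{p \<in> Q. (g \<circ> \<Phi>) p = M} = \<Psi> ` {p \<in> \<Omega>. g p = M}"
  proof
    show "{p \<in> Q. (g \<circ> \<Phi>) p = M} \<subseteq> \<Psi> ` {p \<in> \<Omega>. g p = M}"
    proof
      fix p assume "p \<in> {p \<in> Q. (g \<circ> \<Phi>) p = M}"
      then have "\<Phi> p \<in> {p \<in> \<Omega>. g p = M}" by (simp add: Q_def)
      then show "p \<in> \<Psi> ` {p \<in> \<Omega>. g p = M}" using \<Phi>(3)[of p] by (metis image_eqI)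
    qed
    show "\<Psi> ` {p \<in> \<Omega>. g p = M} \<subseteq> {p \<in> Q. (g \<circ> \<Phi>) p = M}"
      using \<Phi>(4) by (auto simp: Q_def)
  qed
  show False
  proof (rule compact_maximum_set_impossible[of Q "g \<circ> \<Phi>" M])
    show "open Q" unfolding Q_def using open_vimage[OF \<open>open \<Omega>\<close> \<open>continuous_on UNIV \<Phi>\<close>] .
    show "continuous_on Q (g \<circ> \<Phi>)" unfolding Q_def
      by (rule continuous_on_compose[OF continuous_on_subset[OF \<open>continuous_on UNIV \<Phi>\<close>]])
         (auto intro: continuous_on_subset[OF assms(2)])
    show "(g \<circ> \<Phi>) p \<le> M" if "p \<in> Q" for p using assms(3) that by (simp add: Q_def)
    show "compact {p \<in> Q. (g \<circ> \<Phi>) p = M}" unfolding max_set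
      by (intro compact_continuous_image continuous_on_subset[OF \<Phi>(2)] assms(4)) auto
    show "{p \<in> Q. (g \<circ> \<Phi>) p = M} \<noteq> {}" unfolding max_set using assms(5) by simp
    fix p assume "p \<in> Q"
    then have "\<Phi> p \<in> \<Omega>" by (simp add: Q_def)
    then obtain D where D: "(g has_derivative D) (at (\<Phi> p))" "D a = 0 \<longrightarrow> (\<forall>v. D v = 0)"
      using der by blast
    have "((g \<circ> \<Phi>) has_derivative D \<circ> \<Phi>) (at p)"
      using has_derivative_compose[OF bounded_linear_imp_has_derivative[OF \<Phi>(1)] D(1)]
      by (simp add: comp_def)
    moreover have "D a = 0 \<longrightarrow> D (\<Phi> (0, 1)) = 0" using D(2) by blast
    ultimately show "\<exists>D'. ((g \<circ> \<Phi>) has_derivative D') (at p) \<and> (D' (1, 0) = 0 \<longrightarrow> D' (0, 1) = 0)"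
      using \<Phi>(5) by (intro exI[of _ "D \<circ> \<Phi>"]) simp
  qed
qed

lemma superlevel_set_meets_frontier:
  fixes g :: "real \<times> real \<Rightarrow> real" and a :: "real \<times> real"
  assumes "open \<Omega>" "bounded \<Omega>" "continuous_on \<Omega> g" "a \<noteq> 0"
    and der: "\<And>p. p \<in> \<Omega> \<Longrightarrow> \<exists>D. (g has_derivative D) (at p) \<and> (D a = 0 \<longrightarrow> (\<forall>v. D v = 0))"
    and "z0 \<in> \<Omega>"
  shows "frontier \<Omega> \<inter> closure {z \<in> \<Omega>. g z0 \<le> g z} \<noteq> {}"
proof
  define V where "V = {z \<in> \<Omega>. g z0 \<le> g z}"
  assume "frontier \<Omega> \<inter> closure {z \<in> \<Omega>. g z0 \<le> g z} = {}"
  moreover have "closure V \<subseteq> closure \<Omega>" by (rule closure_mono) (auto simp: V_def)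
  ultimately have "closure V \<subseteq> \<Omega>"
    using \<open>open \<Omega>\<close> by (auto simp: V_def frontier_def interior_open)
  then have "V = closure V \<inter> g -` {g z0..}"
    using closure_subset[of V] by (auto simp: V_def)
  then have "closed V"
    using continuous_closed_preimage[OF continuous_on_subset[OF assms(3) \<open>closure V \<subseteq> \<Omega>\<close>], of "{g z0..}"]
    by simp
  moreover have "bounded V" using \<open>bounded \<Omega>\<close> by (rule bounded_subset) (auto simp: V_def)
  ultimately have "compact V" by (simp add: compact_eq_bounded_closed)
  moreover have "continuous_on V g" using assms(3) by (rule continuous_on_subset) (auto simp: V_def)
  moreover have "z0 \<in> V" using \<open>z0 \<in> \<Omega>\<close> by (simp add: V_def)
  ultimately obtain z1 where z1: "z1 \<in> V" "\<And>z. z \<in> V \<Longrightarrow> g z \<le> g z1"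
    using continuous_attains_sup[of V g] by blast
  have max_set: "{p \<in> \<Omega>. g p = g z1} = V \<inter> g -` {g z1}"
    using z1 by (auto simp: V_def)
  show False
  proof (rule compact_maximum_set_impossible_direction[OF \<open>open \<Omega>\<close> assms(3) _ _ _ \<open>a \<noteq> 0\<close> der])
    show "g p \<le> g z1" if "p \<in> \<Omega>" for p
    proof (cases "p \<in> V")
      case False
      then have "g p < g z0" using that by (simp add: V_def)
      then show ?thesis using z1(2)[OF \<open>z0 \<in> V\<close>] by simp
    qed (rule z1(2))
    have "closed (V \<inter> g -` {g z1})"
      using continuous_closed_preimage[OF \<open>continuous_on V g\<close> compact_imp_closed[OF \<open>compact V\<close>]]
      by simp
    from compact_Int_closed[OF \<open>compact V\<close> this]
    show "compact {p \<in> \<Omega>. g p = g z1}" unfolding max_set by simp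
    show "{p \<in> \<Omega>. g p = g z1} \<noteq> {}" unfolding max_set using z1(1) by blast
  qed
qed

lemma inner_gradient_superlevel_set_meets_frontier:
  fixes a :: "real \<times> real"
  assumes "open \<Omega>" "bounded \<Omega>" "C2_on \<Omega> w" "a \<noteq> 0" "z0 \<in> \<Omega>"
    and det: "\<And>p. p \<in> \<Omega> \<Longrightarrow>
      (partial_y (partial_x w) p)\<^sup>2 \<le> partial_x (partial_x w) p * partial_y (partial_y w) p"
  shows "frontier \<Omega> \<inter>
    closure {z \<in> \<Omega>. a \<bullet> (partial_x w z0, partial_y w z0) \<le> a \<bullet> (partial_x w z, partial_y w z)} \<noteq> {}"
proof (rule superlevel_set_meets_frontier[OF assms(1,2) _ assms(4) _ assms(5)])
  show "continuous_on \<Omega> (\<lambda>z. a \<bullet> (partial_x w z, partial_y w z))"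
    using assms(3) unfolding C2_on_def by (auto intro!: continuous_intros)
  show "\<exists>D. ((\<lambda>z. a \<bullet> (partial_x w z, partial_y w z)) has_derivative D) (at p) \<and>
            (D a = 0 \<longrightarrow> (\<forall>v. D v = 0))" if "p \<in> \<Omega>" for p
    by (rule inner_gradient_derivative_null_direction[OF assms(1,3) that det[OF that]])
qed

lemma Limsup_within_eq_SUP_sequence:
  fixes \<phi> :: "'a::topological_space \<Rightarrow> 'b::{complete_linorder,linorder_topology}"
  assumes X: "\<And>n. X n \<in> \<Omega> - {x}" "X \<longlonglongrightarrow> x" and lim: "(\<lambda>n. \<phi> (X n)) \<longlonglongrightarrow> (SUP z\<in>\<Omega>. \<phi> z)"
  shows "Limsup (at x within \<Omega>) \<phi> = (SUP z\<in>\<Omega>. \<phi> z)"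
proof (rule antisym)
  have "eventually (\<lambda>z. z \<in> \<Omega>) (at x within \<Omega>)" by (simp add: eventually_at_filter)
  then show "Limsup (at x within \<Omega>) \<phi> \<le> (SUP z\<in>\<Omega>. \<phi> z)"
    by (intro Limsup_bounded) (auto elim!: eventually_mono intro: SUP_upper)
  have "filterlim X (at x within \<Omega>) sequentially"
    unfolding filterlim_at using X by (auto intro!: always_eventually)
  show "(SUP z\<in>\<Omega>. \<phi> z) \<le> Limsup (at x within \<Omega>) \<phi>"
  proof (rule Limsup_greatest)
    fix P assume "eventually P (at x within \<Omega>)"
    then have "eventually (\<lambda>n. P (X n)) sequentially"
      using \<open>filterlim X (at x within \<Omega>) sequentially\<close> by (simp add: filterlim_iff)
    then show "(SUP z\<in>\<Omega>. \<phi> z) \<le> (SUP z\<in>Collect P. \<phi> z)"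
      by (intro tendsto_upperbound[OF lim]) (auto elim!: eventually_mono intro: SUP_upper)
  qed
qed

lemma Limsup_frontier_eq_SUP_if_maximisers_approach:
  fixes \<phi> :: "'a::metric_space \<Rightarrow> 'b::{complete_linorder,linorder_topology}"
  assumes "open \<Omega>" "x \<in> frontier \<Omega>" "x \<in> closure V" "V \<subseteq> \<Omega>"
    and max: "\<And>z y. z \<in> V \<Longrightarrow> y \<in> \<Omega> \<Longrightarrow> \<phi> y \<le> \<phi> z"
  shows "Limsup (at x within \<Omega>) \<phi> = (SUP z\<in>\<Omega>. \<phi> z)"
proof -
  obtain X where X: "\<And>n. X n \<in> V" "X \<longlonglongrightarrow> x"
    using \<open>x \<in> closure V\<close> closure_sequential by metis
  have "x \<notin> \<Omega>" using assms(1,2) by (simp add: frontier_def interior_open)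
  have "(SUP z\<in>\<Omega>. \<phi> z) = \<phi> (X n)" for n
    using X(1) \<open>V \<subseteq> \<Omega>\<close> max by (intro antisym SUP_least SUP_upper) auto
  then show ?thesis
    using X \<open>V \<subseteq> \<Omega>\<close> \<open>x \<notin> \<Omega>\<close> by (intro Limsup_within_eq_SUP_sequence[of X]) auto
qed

lemma Limsup_frontier_eq_SUP_if_unattained:
  fixes \<phi> :: "'a::heine_borel \<Rightarrow> real"
  assumes "open \<Omega>" "bounded \<Omega>" "\<Omega> \<noteq> {}" "continuous_on \<Omega> \<phi>"
    and unattained: "\<And>z. z \<in> \<Omega> \<Longrightarrow> \<exists>z'\<in>\<Omega>. \<phi> z < \<phi> z'"
  shows "\<exists>x\<in>frontier \<Omega>. Limsup (at x within \<Omega>) (\<lambda>z. ereal (\<phi> z)) = (SUP z\<in>\<Omega>. ereal (\<phi> z))"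
proof -
  define S where "S = (SUP z\<in>\<Omega>. ereal (\<phi> z))"
  obtain g :: "nat \<Rightarrow> ereal" where g: "incseq g" "range g \<subseteq> (\<lambda>z. ereal (\<phi> z)) ` \<Omega>" "S = (SUP i. g i)"
    using Sup_countable_SUP[of "(\<lambda>z. ereal (\<phi> z)) ` \<Omega>"] \<open>\<Omega> \<noteq> {}\<close> unfolding S_def by auto
  have "\<forall>n. \<exists>z. z \<in> \<Omega> \<and> g n = ereal (\<phi> z)" using g(2) by blast
  then obtain X where X: "\<And>n. X n \<in> \<Omega>" "\<And>n. g n = ereal (\<phi> (X n))" by metis
  have "g \<longlonglongrightarrow> S" using LIMSEQ_SUP[OF g(1)] g(3) by simp
  obtain x r where xr: "x \<in> closure \<Omega>" "strict_mono r" "(X \<circ> r) \<longlonglongrightarrow> x"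
    using compact_imp_seq_compact[of "closure \<Omega>"] \<open>bounded \<Omega>\<close> X(1) closure_subset
    by (metis compact_closure seq_compactE subsetD)
  have lim: "(\<lambda>n. ereal (\<phi> (X (r n)))) \<longlonglongrightarrow> S"
    using LIMSEQ_subseq_LIMSEQ[OF \<open>g \<longlonglongrightarrow> S\<close> xr(2)] X(2) by (simp add: o_def)
  have "x \<notin> \<Omega>"
  proof
    assume "x \<in> \<Omega>"
    then have "isCont \<phi> x" using assms(1,4) continuous_on_eq_continuous_at by blast
    then have "(\<lambda>n. ereal (\<phi> (X (r n)))) \<longlonglongrightarrow> ereal (\<phi> x)"
      using isCont_tendsto_compose[OF _ xr(3)] by (simp add: o_def tendsto_ereal)
    then have "ereal (\<phi> x) = S" using lim LIMSEQ_unique by blast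
    moreover obtain z where "z \<in> \<Omega>" "\<phi> x < \<phi> z" using unattained[OF \<open>x \<in> \<Omega>\<close>] by blast
    moreover have "ereal (\<phi> z) \<le> S" unfolding S_def using \<open>z \<in> \<Omega>\<close> by (rule SUP_upper)
    ultimately show False by (metis ereal_less_eq(3) not_le)
  qed
  then have "x \<in> frontier \<Omega>" using xr(1) \<open>open \<Omega>\<close> by (simp add: frontier_def interior_open)
  moreover have "Limsup (at x within \<Omega>) (\<lambda>z. ereal (\<phi> z)) = S"
    unfolding S_def using X(1) xr(3) lim \<open>x \<notin> \<Omega>\<close>
    by (intro Limsup_within_eq_SUP_sequence[of "X \<circ> r"]) (auto simp: S_def)
  ultimately show ?thesis unfolding S_def by blast
qed

lemma quasi_convex_strict_sublevel_convex:
  assumes "quasi_convex \<psi>"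
  shows "convex {z. \<psi> z < r}"
proof (rule convexI)
  fix x y and u v :: real
  assume "x \<in> {z. \<psi> z < r}" "y \<in> {z. \<psi> z < r}" "0 \<le> u" "0 \<le> v" "u + v = 1"
  moreover have "convex {z. \<psi> z \<le> max (\<psi> x) (\<psi> y)}"
    using assms by (simp add: quasi_convex_def)
  ultimately have "u *\<^sub>R x + v *\<^sub>R y \<in> {z. \<psi> z \<le> max (\<psi> x) (\<psi> y)}"
    by (intro convexD) auto
  then have "\<psi> (u *\<^sub>R x + v *\<^sub>R y) \<le> max (\<psi> x) (\<psi> y)" by simp
  then show "u *\<^sub>R x + v *\<^sub>R y \<in> {z. \<psi> z < r}"
    using \<open>x \<in> {z. \<psi> z < r}\<close> \<open>y \<in> {z. \<psi> z < r}\<close> by simp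
qed

lemma quasi_convex_supporting_halfplane:
  fixes \<psi> :: "real \<times> real \<Rightarrow> real"
  assumes "continuous_on UNIV \<psi>" "quasi_convex \<psi>"
  obtains a where "a \<noteq> 0" "\<And>u. a \<bullet> q \<le> a \<bullet> u \<Longrightarrow> \<psi> q \<le> \<psi> u"
proof (cases "\<forall>u. \<psi> q \<le> \<psi> u")
  case True
  show ?thesis by (rule that[of "(1, 0)"]) (simp_all add: zero_prod_def True[rule_format])
next
  case False
  define U where "U = {u. \<psi> u < \<psi> q}"
  have "open U" unfolding U_def
    by (rule open_Collect_less[OF assms(1)]) (auto intro: continuous_intros)
  moreover have "convex U" unfolding U_def using assms(2) by (rule quasi_convex_strict_sublevel_convex)
  moreover have "U \<noteq> {}" "q \<notin> U" using False by (auto simp: U_def not_le)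
  ultimately obtain a \<beta> where a: "a \<noteq> 0" "\<And>u. u \<in> U \<Longrightarrow> a \<bullet> u \<le> \<beta>" "\<beta> \<le> a \<bullet> q"
    using separating_hyperplane_sets[of U "{q}"] by auto
  \<comment> \<open>U is open, so it cannot touch the separating line\<close>
  have strict: "a \<bullet> u < a \<bullet> q" if "u \<in> U" for u
  proof -
    obtain e where e: "e > 0" "ball u e \<subseteq> U" using \<open>open U\<close> \<open>u \<in> U\<close> open_contains_ball by blast
    define u' where "u' = u + (e / 2 / norm a) *\<^sub>R a"
    have "u' \<in> U" using e a(1) by (intro subsetD[OF e(2)]) (simp add: u'_def dist_norm)
    moreover have "a \<bullet> u' = a \<bullet> u + e / 2 * norm a"
      using a(1) by (simp add: u'_def inner_add_right power2_norm_eq_inner[symmetric] power2_eq_square)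
    moreover have "e / 2 * norm a > 0" using e(1) a(1) by simp
    ultimately show ?thesis using a(2)[of u'] a(3) by linarith
  qed
  show ?thesis
  proof (rule that[OF a(1)])
    fix u assume "a \<bullet> q \<le> a \<bullet> u"
    then have "u \<notin> U" using strict[of u] by linarith
    then show "\<psi> q \<le> \<psi> u" by (simp add: U_def)
  qed
qed

theorem theorem5:
  fixes \<Omega> :: "(real \<times> real) set" and h w :: "real \<times> real \<Rightarrow> real"
  assumes "open \<Omega>" and "bounded \<Omega>" and "\<Omega> \<noteq> {}"
    and "continuous_on \<Omega> h" and "\<And>p. p \<in> \<Omega> \<Longrightarrow> h p \<ge> 0"
    and "C2_on \<Omega> w"
    and "\<And>p. p \<in> \<Omega> \<Longrightarrow>
           partial_x (partial_x w) p * partial_y (partial_y w) p - (partial_y (partial_x w) p)\<^sup>2 = h p"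
  shows "convex_hull_like \<Omega> (\<lambda>p. (partial_x w p, partial_y w p))"
proof -
  define f where "f p = (partial_x w p, partial_y w p)" for p
  have cf: "continuous_on \<Omega> f"
    using assms(6) unfolding C2_on_def f_def by (auto intro: continuous_on_Pair)
  have det: "(partial_y (partial_x w) p)\<^sup>2 \<le> partial_x (partial_x w) p * partial_y (partial_y w) p"
    if "p \<in> \<Omega>" for p
    using assms(5,7)[OF that] by linarith
  have "\<exists>x\<in>frontier \<Omega>. Limsup (at x within \<Omega>) (\<lambda>z. ereal (\<psi> (f z))) = (SUP z\<in>\<Omega>. ereal (\<psi> (f z)))"
    if \<psi>: "continuous_on UNIV \<psi>" "quasi_convex \<psi>" for \<psi>
  proof (cases "\<exists>z0\<in>\<Omega>. \<forall>z\<in>\<Omega>. \<psi> (f z) \<le> \<psi> (f z0)")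
    case True
    then obtain z0 where z0: "z0 \<in> \<Omega>" "\<And>z. z \<in> \<Omega> \<Longrightarrow> \<psi> (f z) \<le> \<psi> (f z0)" by blast
    obtain a where a: "a \<noteq> 0" "\<And>u. a \<bullet> f z0 \<le> a \<bullet> u \<Longrightarrow> \<psi> (f z0) \<le> \<psi> u"
      using quasi_convex_supporting_halfplane[OF \<psi>] by blast
    obtain x where x: "x \<in> frontier \<Omega>" "x \<in> closure {z \<in> \<Omega>. a \<bullet> f z0 \<le> a \<bullet> f z}"
      using inner_gradient_superlevel_set_meets_frontier[OF assms(1,2,6) a(1) z0(1) det]
      unfolding f_def by blast
    have "Limsup (at x within \<Omega>) (\<lambda>z. ereal (\<psi> (f z))) = (SUP z\<in>\<Omega>. ereal (\<psi> (f z)))"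
    proof (rule Limsup_frontier_eq_SUP_if_maximisers_approach[OF assms(1) x])
      fix z y assume "z \<in> {z \<in> \<Omega>. a \<bullet> f z0 \<le> a \<bullet> f z}" "y \<in> \<Omega>"
      then show "ereal (\<psi> (f y)) \<le> ereal (\<psi> (f z))" using z0(2)[of y] a(2)[of "f z"] by simp
    qed auto
    then show ?thesis using x(1) by blast
  next
    case False
    then show ?thesis
      using Limsup_frontier_eq_SUP_if_unattained[OF assms(1-3) continuous_on_compose2[OF \<psi>(1) cf]]
      by (auto simp: not_le)
  qed
  then show ?thesis unfolding convex_hull_like_def f_def by blast
qed

end
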